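(* Let $\mathscr{F}(r)=\int_0^1 t^{r-1/2}\sqrt{1+t}\,\arcsin t\,\mathrm{d}t$ for nonnegative integers $r$. Then for every nonnegative integer $r$, $$\mathscr{F}(r)=\frac{(-1)^r}{4^r}\frac{\binom{2r}{r}}{r+1}\left(\mathscr{F}(0)+\frac{1}{2}\sum_{k=1}^r\frac{(-1)^k4^k}{\binom{2k}{k}}\,\omega_k\right),$$ where $\omega_k=2\sqrt{2}\pi-2B(k+3/2,1/2)-2B(k+1/2,1/2)$.
   Context: $B(u,v)=\int_0^1 t^{u-1}(1-t)^{v-1}\,\mathrm{d}t$ denotes the Beta function. *)

theory Defs
  imports "HOL-Analysis.Analysis"
begin

definition scrF :: "nat \<Rightarrow> real" where
  "scrF r = integral {0..1} (\<lambda>t. t powr (real r - 1/2) * sqrt (1 + t) * arcsin t)"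

definition omega :: "nat \<Rightarrow> real" where
  "omega k = 2 * sqrt 2 * pi - 2 * Beta (real k + 3/2) (1/2) - 2 * Beta (real k + 1/2) (1/2)"

end

(*
  Differentiating t^a (1+t)^(3/2) arcsin t and integrating over [0,1] gives, for
  M(a) = int_0^1 t^(a-1) sqrt(1+t) arcsin t and a > 0,
    a M(a) + (a + 3/2) M(a+1) = sqrt 2 pi - B(a+1, 1/2) - B(a+2, 1/2),
  the Beta terms coming from t^a (1+t)^(3/2) / sqrt(1-t^2) = (t^a + t^(a+1)) / sqrt(1-t).
  For a = r + 1/2 this is the first-order recurrence (2r+1) F(r) + 2(r+2) F(r+1) = omega(r+1),
  and the claimed formula is its solution by variation of constants, the homogeneous solution
  being (-1)^r 4^(-r) binom(2r,r) / (r+1).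
*)
theory Submission
  imports Defs
begin

definition arcsin_integrand :: "real \<Rightarrow> real \<Rightarrow> real" where
  "arcsin_integrand a t = t powr (a - 1) * sqrt (1 + t) * arcsin t"

lemma has_real_derivative_arcsin_antiderivative:
  fixes a t :: real
  assumes "0 < t" "t < 1"
  shows "((\<lambda>s. s powr a * (1 + s) * sqrt (1 + s) * arcsin s) has_real_derivative
           a * arcsin_integrand a t + (a + 3/2) * arcsin_integrand (a + 1) t
           + t powr a * (1 - t) powr (-1/2) + t powr (a + 1) * (1 - t) powr (-1/2)) (at t)"
proof -
  have "((\<lambda>s. s powr a * (1 + s) * sqrt (1 + s) * arcsin s) has_real_derivative
          a * t powr (a - 1) * (1 + t) * sqrt (1 + t) * arcsin t
          + t powr a * sqrt (1 + t) * arcsin t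
          + t powr a * (1 + t) * (inverse (sqrt (1 + t)) / 2) * arcsin t
          + t powr a * (1 + t) * sqrt (1 + t) * inverse (sqrt (1 - t) * sqrt (1 + t))) (at t)"
    using assms
    by (auto intro!: derivative_eq_intros has_real_derivative_powr DERIV_arcsin
             simp: real_sqrt_mult[symmetric] power2_eq_square algebra_simps)
  \<comment> \<open>\<open>u = sqrt (1 + t)\<close>, \<open>v = sqrt (1 - t)\<close>, \<open>p = t powr a\<close>, \<open>A = arcsin t\<close>\<close>
  moreover have "a * (p / t) * (1 + t) * u * A + p * u * A + p * (1 + t) * (inverse u / 2) * A
      + p * (1 + t) * u * inverse (v * u)
    = a * (p / t * u * A) + (a + 3/2) * (p * u * A) + p * (1 / v) + p * t * (1 / v)"
    if "u * u = 1 + t" "u > 0" "v > 0" for u v p A :: real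
    using that assms by (simp add: field_simps) (use that in algebra)
  moreover have "(1 - t) powr (-1/2) = 1 / sqrt (1 - t)"
    "t powr (a - 1) = t powr a / t" "t powr (a + 1) = t powr a * t"
    using assms by (simp_all add: powr_minus_divide powr_half_sqrt powr_diff powr_add)
  ultimately show ?thesis
    using assms unfolding arcsin_integrand_def by simp
qed

definition arcsin_moment :: "real \<Rightarrow> real" where
  "arcsin_moment a = integral {0..1} (arcsin_integrand a)"

lemma continuous_on_arcsin_integrand:
  "1 < a \<Longrightarrow> continuous_on {0..1} (arcsin_integrand a)"
  unfolding arcsin_integrand_def by (intro continuous_intros continuous_on_powr') auto

lemma arcsin_moment_recurrence:
  fixes a :: real
  assumes "0 < a"
  shows "a * arcsin_moment a + (a + 3/2) * arcsin_moment (a + 1)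
           = sqrt 2 * pi - Beta (a + 1) (1/2) - Beta (a + 2) (1/2)"
proof -
  define P where "P s = s powr a * (1 + s) * sqrt (1 + s) * arcsin s" for s :: real
  define beta_terms where
    "beta_terms t = t powr a * (1 - t) powr (-1/2) + t powr (a + 1) * (1 - t) powr (-1/2)" for t :: real
  have "continuous_on {0..1} P"
    unfolding P_def using assms by (intro continuous_intros continuous_on_powr') auto
  then have ftc: "((\<lambda>t. a * arcsin_integrand a t + (a + 3/2) * arcsin_integrand (a + 1) t
                     + beta_terms t) has_integral (P 1 - P 0)) {0..1}"
    unfolding beta_terms_def add.assoc[symmetric]
    using has_real_derivative_arcsin_antiderivative[of _ a]
    by (intro fundamental_theorem_of_calculus_interior_strong[of "{}"])
       (auto simp: P_def has_real_derivative_iff_has_vector_derivative[symmetric])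
  have P_diff: "P 1 - P 0 = sqrt 2 * pi"
    unfolding P_def using assms by simp
  have beta: "(beta_terms has_integral Beta (a + 1) (1/2) + Beta (a + 2) (1/2)) {0..1}"
    unfolding beta_terms_def
    using assms has_integral_Beta_real[of "a + 1" "1/2"] has_integral_Beta_real[of "a + 2" "1/2"]
    by (intro has_integral_add) (simp_all add: add.commute)
  have shifted: "(arcsin_integrand (a + 1) has_integral arcsin_moment (a + 1)) {0..1}"
    unfolding arcsin_moment_def using assms continuous_on_arcsin_integrand[of "a + 1"]
    by (simp add: integrable_continuous_real integrable_integral)
  \<comment> \<open>For \<open>a \<le> 1\<close> the integrand is not continuous at 0; its integrability comes out of this identity.\<close>
  have "((\<lambda>t. a * arcsin_integrand a t) has_integral
      sqrt 2 * pi - (Beta (a + 1) (1/2) + Beta (a + 2) (1/2)) - (a + 3/2) * arcsin_moment (a + 1)) {0..1}"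
    using has_integral_diff[OF has_integral_diff[OF ftc beta] has_integral_mult_right[OF shifted, of "a + 3/2"]]
    unfolding P_diff by simp
  then have "(arcsin_integrand a has_integral
      (sqrt 2 * pi - (Beta (a + 1) (1/2) + Beta (a + 2) (1/2)) - (a + 3/2) * arcsin_moment (a + 1)) / a) {0..1}"
    using assms by (simp add: has_integral_mult_right_iff)
  then show ?thesis
    unfolding arcsin_moment_def using assms by (simp add: integral_unique field_simps)
qed

lemma scrF_eq_arcsin_moment: "scrF r = arcsin_moment (real r + 1/2)"
  unfolding scrF_def arcsin_moment_def arcsin_integrand_def by (simp add: algebra_simps)

lemma scrF_recurrence:
  "(2 * real r + 1) * scrF r + 2 * (real r + 2) * scrF (Suc r) = omega (Suc r)"
  using arcsin_moment_recurrence[of "real r + 1/2"]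
  unfolding scrF_eq_arcsin_moment omega_def by (simp add: algebra_simps)

lemma central_binomial_Suc:
  "(2 * Suc n choose Suc n) * Suc n = 2 * (2 * n + 1) * (2 * n choose n)"
proof -
  have "(2 * Suc n choose Suc n) * Suc n = 2 * ((Suc (2 * n) choose n) * Suc n)"
    using Suc_times_binomial_eq[of "Suc (2 * n)" n] by (simp del: binomial_Suc_Suc add: algebra_simps)
  also have "(Suc (2 * n) choose n) * Suc n = Suc (2 * n) * (2 * n choose n)"
    using Suc_times_binomial_eq[of "2 * n" n] binomial_symmetric[of n "Suc (2 * n)"]
    by (simp del: binomial_Suc_Suc)
  finally show ?thesis by simp
qed

lemma linear_recurrence_closed_form:
  fixes x c y :: "nat \<Rightarrow> 'a::field"
  assumes "\<And>n. c n \<noteq> 0"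
    and "\<And>n. x (Suc n) = c (Suc n) / c n * x n + c (Suc n) * y (Suc n)"
  shows "x n = c n * (x 0 / c 0 + (\<Sum>k=1..n. y k))"
proof (induction n)
  case 0
  show ?case using assms(1)[of 0] by simp
next
  case (Suc n)
  then show ?case using assms(1)[of n] by (simp add: assms(2) field_simps)
qed

definition homogeneous_solution :: "nat \<Rightarrow> real" where
  "homogeneous_solution k = (-1) ^ k / 4 ^ k * (real ((2*k) choose k) / (real k + 1))"

lemma homogeneous_solution_nonzero: "homogeneous_solution k \<noteq> 0"
  unfolding homogeneous_solution_def by simp

lemma homogeneous_solution_recurrence:
  "(2 * real n + 1) * homogeneous_solution n + 2 * (real n + 2) * homogeneous_solution (Suc n) = 0"
proof -
  have "real (2 * Suc n choose Suc n) * (real n + 1) = 2 * (2 * real n + 1) * real (2 * n choose n)"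
    using arg_cong[OF central_binomial_Suc[of n], of real]
    by (simp del: binomial_Suc_Suc add: algebra_simps)
  then have binomial_Suc:
    "real (2 * Suc n choose Suc n) = 2 * (2 * real n + 1) / (real n + 1) * real (2 * n choose n)"
    by (simp add: field_simps)
  show ?thesis
    unfolding homogeneous_solution_def binomial_Suc by (simp add: field_split_simps add_nonneg_eq_0_iff)
qed

theorem proposition6p0p1:
  fixes r :: nat
  shows "scrF r = (-1) ^ r / 4 ^ r * (real ((2*r) choose r) / (real r + 1)) *
           (scrF 0 + 1/2 * (\<Sum>k=1..r. (-1) ^ k * 4 ^ k / real ((2*k) choose k) * omega k))"
proof -
  let ?h = homogeneous_solution
  define y :: "nat \<Rightarrow> real" where
    "y k = 1/2 * ((-1) ^ k * 4 ^ k / real ((2*k) choose k) * omega k)" for k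
  have h_ratio: "?h (Suc n) / ?h n = - (2 * real n + 1) / (2 * (real n + 2))" for n
    using homogeneous_solution_recurrence[of n] homogeneous_solution_nonzero[of n]
    by (simp add: field_split_simps add_nonneg_eq_0_iff)
  have h_y: "?h k * y k = omega k / (2 * (real k + 1))" for k
    unfolding homogeneous_solution_def y_def by (simp add: field_split_simps add_nonneg_eq_0_iff)
  have "scrF r = ?h r * (scrF 0 / ?h 0 + (\<Sum>k=1..r. y k))"
  proof (rule linear_recurrence_closed_form[OF homogeneous_solution_nonzero])
    show "scrF (Suc n) = ?h (Suc n) / ?h n * scrF n + ?h (Suc n) * y (Suc n)" for n
      unfolding h_ratio h_y scrF_recurrence[of n, symmetric]
      by (simp add: field_split_simps add_nonneg_eq_0_iff)
  qed
  then show ?thesis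
    by (simp add: homogeneous_solution_def y_def sum_distrib_left)
qed

end
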